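(* Let $\mathcal{C}$ be a skeletally small triangulated category, $H$ a $\mathbb{Q}$-subspace of $G(\mathcal{C})_{\mathbb{Q}}$, and $\mathcal{I}(H)$ the set of dense subcategories $\mathcal{D}$ of $\mathcal{C}$ with $\operatorname{image}(G(\mathcal{D})_{\mathbb{Q}}\to G(\mathcal{C})_{\mathbb{Q}})=H$, ordered by inclusion. Then $\mathcal{I}(H)$ has a unique maximal element.
   Context: $G(-)$ denotes the Grothendieck group of a triangulated category; $H_{\mathbb{Q}}=H\otimes_{\mathbb{Z}}\mathbb{Q}$. A dense subcategory is a triangulated subcategory $\mathcal{D}$ (full, closed under $[\pm1]$, isomorphisms and cones) such that for every $U\in\mathcal{C}$ there is $V$ with $U\oplus V\in\mathcal{D}$. *)

theory Defs
  imports Complex_Main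
begin

text \<open>A category with an explicit object set is automatically (skeletally) small.
  Composition: cmp g f = g after f.\<close>

record ('o, 'm) tricat =
  obj :: "'o set"
  mor :: "'m set"
  src :: "'m \<Rightarrow> 'o"
  tgt :: "'m \<Rightarrow> 'o"
  cmp :: "'m \<Rightarrow> 'm \<Rightarrow> 'm"
  idm :: "'o \<Rightarrow> 'm"
  pls :: "'m \<Rightarrow> 'm \<Rightarrow> 'm"
  zro :: "'o \<Rightarrow> 'o \<Rightarrow> 'm"
  ngt :: "'m \<Rightarrow> 'm"
  shO :: "'o \<Rightarrow> 'o"
  shM :: "'m \<Rightarrow> 'm"
  dist :: "('m \<times> 'm \<times> 'm) set"

definition hom :: "('o,'m,'x) tricat_scheme \<Rightarrow> 'o \<Rightarrow> 'o \<Rightarrow> 'm set" where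
  "hom C X Y = {f \<in> mor C. src C f = X \<and> tgt C f = Y}"

definition is_category :: "('o,'m,'x) tricat_scheme \<Rightarrow> bool" where
  "is_category C \<longleftrightarrow>
     (\<forall>f \<in> mor C. src C f \<in> obj C \<and> tgt C f \<in> obj C) \<and>
     (\<forall>X \<in> obj C. idm C X \<in> hom C X X) \<and>
     (\<forall>X\<in>obj C. \<forall>Y\<in>obj C. \<forall>Z\<in>obj C. \<forall>f \<in> hom C X Y. \<forall>g \<in> hom C Y Z.
        cmp C g f \<in> hom C X Z) \<and>
     (\<forall>W\<in>obj C. \<forall>X\<in>obj C. \<forall>Y\<in>obj C. \<forall>Z\<in>obj C.
        \<forall>f \<in> hom C W X. \<forall>g \<in> hom C X Y. \<forall>h \<in> hom C Y Z.
        cmp C h (cmp C g f) = cmp C (cmp C h g) f) \<and>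
     (\<forall>X\<in>obj C. \<forall>Y\<in>obj C. \<forall>f \<in> hom C X Y.
        cmp C f (idm C X) = f \<and> cmp C (idm C Y) f = f)"

definition is_preadditive :: "('o,'m,'x) tricat_scheme \<Rightarrow> bool" where
  "is_preadditive C \<longleftrightarrow> is_category C \<and>
     (\<forall>X\<in>obj C. \<forall>Y\<in>obj C.
        zro C X Y \<in> hom C X Y \<and>
        (\<forall>f \<in> hom C X Y. ngt C f \<in> hom C X Y \<and>
           pls C f (zro C X Y) = f \<and> pls C f (ngt C f) = zro C X Y) \<and>
        (\<forall>f \<in> hom C X Y. \<forall>g \<in> hom C X Y. pls C f g \<in> hom C X Y \<and> pls C f g = pls C g f) \<and>
        (\<forall>f \<in> hom C X Y. \<forall>g \<in> hom C X Y. \<forall>h \<in> hom C X Y.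
           pls C (pls C f g) h = pls C f (pls C g h))) \<and>
     (\<forall>X\<in>obj C. \<forall>Y\<in>obj C. \<forall>Z\<in>obj C.
        \<forall>f \<in> hom C X Y. \<forall>f' \<in> hom C X Y. \<forall>g \<in> hom C Y Z. \<forall>g' \<in> hom C Y Z.
          cmp C (pls C g g') f = pls C (cmp C g f) (cmp C g' f) \<and>
          cmp C g (pls C f f') = pls C (cmp C g f) (cmp C g f'))"

definition is_zero_obj :: "('o,'m,'x) tricat_scheme \<Rightarrow> 'o \<Rightarrow> bool" where
  "is_zero_obj C Z \<longleftrightarrow> Z \<in> obj C \<and> idm C Z = zro C Z Z"

definition is_biprod :: "('o,'m,'x) tricat_scheme \<Rightarrow> 'o \<Rightarrow> 'o \<Rightarrow> 'o \<Rightarrow> bool" where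
  "is_biprod C U V W \<longleftrightarrow> W \<in> obj C \<and>
     (\<exists>i1 \<in> hom C U W. \<exists>i2 \<in> hom C V W. \<exists>p1 \<in> hom C W U. \<exists>p2 \<in> hom C W V.
        cmp C p1 i1 = idm C U \<and> cmp C p2 i2 = idm C V \<and>
        cmp C p1 i2 = zro C V U \<and> cmp C p2 i1 = zro C U V \<and>
        pls C (cmp C i1 p1) (cmp C i2 p2) = idm C W)"

definition is_additive :: "('o,'m,'x) tricat_scheme \<Rightarrow> bool" where
  "is_additive C \<longleftrightarrow> is_preadditive C \<and> (\<exists>Z. is_zero_obj C Z) \<and>
     (\<forall>U\<in>obj C. \<forall>V\<in>obj C. \<exists>W. is_biprod C U V W)"

definition is_iso_mor :: "('o,'m,'x) tricat_scheme \<Rightarrow> 'm \<Rightarrow> bool" where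
  "is_iso_mor C f \<longleftrightarrow> f \<in> mor C \<and>
     (\<exists>g \<in> hom C (tgt C f) (src C f).
        cmp C g f = idm C (src C f) \<and> cmp C f g = idm C (tgt C f))"

definition isomorphic :: "('o,'m,'x) tricat_scheme \<Rightarrow> 'o \<Rightarrow> 'o \<Rightarrow> bool" where
  "isomorphic C X Y \<longleftrightarrow> X \<in> obj C \<and> Y \<in> obj C \<and> (\<exists>f \<in> hom C X Y. is_iso_mor C f)"

definition is_shift :: "('o,'m,'x) tricat_scheme \<Rightarrow> bool" where
  "is_shift C \<longleftrightarrow>
     (\<forall>X\<in>obj C. shO C X \<in> obj C) \<and>
     (\<forall>X\<in>obj C. \<forall>Y\<in>obj C. bij_betw (shM C) (hom C X Y) (hom C (shO C X) (shO C Y))) \<and>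
     (\<forall>X\<in>obj C. shM C (idm C X) = idm C (shO C X)) \<and>
     (\<forall>X\<in>obj C. \<forall>Y\<in>obj C. \<forall>Z\<in>obj C. \<forall>f \<in> hom C X Y. \<forall>g \<in> hom C Y Z.
        shM C (cmp C g f) = cmp C (shM C g) (shM C f)) \<and>
     (\<forall>X\<in>obj C. \<forall>Y\<in>obj C. \<forall>f \<in> hom C X Y. \<forall>g \<in> hom C X Y.
        shM C (pls C f g) = pls C (shM C f) (shM C g)) \<and>
     (\<forall>Y\<in>obj C. \<exists>X\<in>obj C. isomorphic C (shO C X) Y)"

definition is_triangle :: "('o,'m,'x) tricat_scheme \<Rightarrow> 'm \<times> 'm \<times> 'm \<Rightarrow> bool" where
  "is_triangle C t = (case t of (f, g, h) \<Rightarrow>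
     f \<in> mor C \<and> g \<in> mor C \<and> h \<in> mor C \<and> tgt C f = src C g \<and> tgt C g = src C h \<and>
     tgt C h = shO C (src C f))"

definition TR1 :: "('o,'m,'x) tricat_scheme \<Rightarrow> bool" where
  "TR1 C \<longleftrightarrow>
     (\<forall>f g h f' g' h' a b c. (f,g,h) \<in> dist C \<and> is_triangle C (f',g',h') \<and>
        a \<in> hom C (src C f) (src C f') \<and> b \<in> hom C (src C g) (src C g') \<and>
        c \<in> hom C (src C h) (src C h') \<and>
        is_iso_mor C a \<and> is_iso_mor C b \<and> is_iso_mor C c \<and>
        cmp C b f = cmp C f' a \<and> cmp C c g = cmp C g' b \<and> cmp C (shM C a) h = cmp C h' c
        \<longrightarrow> (f',g',h') \<in> dist C) \<and>
     (\<forall>X\<in>obj C. \<forall>Z. is_zero_obj C Z \<longrightarrow>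
        (idm C X, zro C X Z, zro C Z (shO C X)) \<in> dist C) \<and>
     (\<forall>f \<in> mor C. \<exists>g h. (f, g, h) \<in> dist C)"

definition TR2 :: "('o,'m,'x) tricat_scheme \<Rightarrow> bool" where
  "TR2 C \<longleftrightarrow> (\<forall>f g h. is_triangle C (f,g,h) \<longrightarrow>
     ((f,g,h) \<in> dist C \<longleftrightarrow> (g, h, ngt C (shM C f)) \<in> dist C))"

definition TR3 :: "('o,'m,'x) tricat_scheme \<Rightarrow> bool" where
  "TR3 C \<longleftrightarrow> (\<forall>f g h f' g' h' u v. (f,g,h) \<in> dist C \<and> (f',g',h') \<in> dist C \<and>
     u \<in> hom C (src C f) (src C f') \<and> v \<in> hom C (src C g) (src C g') \<and>
     cmp C v f = cmp C f' u \<longrightarrow>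
     (\<exists>w \<in> hom C (src C h) (src C h').
        cmp C w g = cmp C g' v \<and> cmp C (shM C u) h = cmp C h' w))"

text \<open>Octahedral axiom: u : X -> Y, v : Y -> Z, with distinguished triangles
  (u, j, k) on Z', (v, l, i) on X', (v u, m, n) on Y'.\<close>
definition TR4 :: "('o,'m,'x) tricat_scheme \<Rightarrow> bool" where
  "TR4 C \<longleftrightarrow> (\<forall>u v j k l i m n.
     (u, j, k) \<in> dist C \<and> (v, l, i) \<in> dist C \<and> (cmp C v u, m, n) \<in> dist C \<and>
     tgt C u = src C v \<longrightarrow>
     (\<exists>f \<in> hom C (src C k) (src C n). \<exists>g \<in> hom C (src C n) (src C i).
        (f, g, cmp C (shM C j) i) \<in> dist C \<and>
        cmp C m v = cmp C f j \<and> cmp C n f = k \<and> l = cmp C g m \<and>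
        cmp C (shM C u) n = cmp C i g))"

definition triangulated :: "('o,'m,'x) tricat_scheme \<Rightarrow> bool" where
  "triangulated C \<longleftrightarrow> is_additive C \<and> is_shift C \<and>
     (\<forall>t \<in> dist C. is_triangle C t) \<and> TR1 C \<and> TR2 C \<and> TR3 C \<and> TR4 C"

section \<open>Triangulated and dense subcategories (full subcategories = object sets)\<close>

definition triangulated_subcat :: "('o,'m,'x) tricat_scheme \<Rightarrow> 'o set \<Rightarrow> bool" where
  "triangulated_subcat C D \<longleftrightarrow> D \<subseteq> obj C \<and>
     (\<forall>X \<in> D. \<forall>Y. isomorphic C X Y \<longrightarrow> Y \<in> D) \<and>
     (\<forall>X \<in> obj C. X \<in> D \<longrightarrow> shO C X \<in> D) \<and>
     (\<forall>X \<in> obj C. shO C X \<in> D \<longrightarrow> X \<in> D) \<and>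
     (\<forall>f g h. (f,g,h) \<in> dist C \<and> src C f \<in> D \<and> tgt C f \<in> D \<longrightarrow> tgt C g \<in> D)"

definition dense_subcat :: "('o,'m,'x) tricat_scheme \<Rightarrow> 'o set \<Rightarrow> bool" where
  "dense_subcat C D \<longleftrightarrow> triangulated_subcat C D \<and>
     (\<forall>U \<in> obj C. \<exists>V \<in> obj C. \<exists>W \<in> D. is_biprod C U V W)"

text \<open>G(S)_Q, for a full triangulated subcategory with object set S, is realised as
  the Q-vector space Q^(S) (finitely supported functions) modulo the Q-span of the
  relations [X] - [Y] + [Z] for distinguished triangles in S and [X] - [X'] for
  isomorphic X, X' in S. This is (Z^(S)/relations) tensor Q, by right exactness.\<close>

definition delta :: "'o \<Rightarrow> 'o \<Rightarrow> rat" where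
  "delta a = (\<lambda>x. if x = a then 1 else 0)"

definition fvec :: "'o set \<Rightarrow> ('o \<Rightarrow> rat) set" where
  "fvec S = {v. finite {x. v x \<noteq> 0} \<and> (\<forall>x. v x \<noteq> 0 \<longrightarrow> x \<in> S)}"

inductive_set qspan :: "('o \<Rightarrow> rat) set \<Rightarrow> ('o \<Rightarrow> rat) set" for B where
  zero: "(\<lambda>_. 0) \<in> qspan B"
| gen: "b \<in> B \<Longrightarrow> b \<in> qspan B"
| add: "a \<in> qspan B \<Longrightarrow> b \<in> qspan B \<Longrightarrow> (\<lambda>x. a x + b x) \<in> qspan B"
| smult: "a \<in> qspan B \<Longrightarrow> (\<lambda>x. c * a x) \<in> qspan B"

definition relgens :: "('o,'m,'x) tricat_scheme \<Rightarrow> 'o set \<Rightarrow> ('o \<Rightarrow> rat) set" where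
  "relgens C S =
     {(\<lambda>x. delta (src C f) x - delta (tgt C f) x + delta (tgt C g) x) | f g h.
        (f,g,h) \<in> dist C \<and> src C f \<in> S \<and> tgt C f \<in> S \<and> tgt C g \<in> S}
   \<union> {(\<lambda>x. delta X x - delta Y x) | X Y. X \<in> S \<and> Y \<in> S \<and> isomorphic C X Y}"

definition cls :: "('o,'m,'x) tricat_scheme \<Rightarrow> 'o set \<Rightarrow> ('o \<Rightarrow> rat) \<Rightarrow> ('o \<Rightarrow> rat) set" where
  "cls C S v = {w \<in> fvec S. (\<lambda>x. w x - v x) \<in> qspan (relgens C S)}"

definition GQ :: "('o,'m,'x) tricat_scheme \<Rightarrow> 'o set \<Rightarrow> ('o \<Rightarrow> rat) set set" where
  "GQ C S = cls C S ` fvec S"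

definition rep :: "('o \<Rightarrow> rat) set \<Rightarrow> ('o \<Rightarrow> rat)" where
  "rep a = (SOME v. v \<in> a)"

definition GQ_subspace :: "('o,'m,'x) tricat_scheme \<Rightarrow> ('o \<Rightarrow> rat) set set \<Rightarrow> bool" where
  "GQ_subspace C H \<longleftrightarrow> H \<subseteq> GQ C (obj C) \<and>
     cls C (obj C) (\<lambda>_. 0) \<in> H \<and>
     (\<forall>a \<in> H. \<forall>b \<in> H. cls C (obj C) (\<lambda>x. rep a x + rep b x) \<in> H) \<and>
     (\<forall>a \<in> H. \<forall>c::rat. cls C (obj C) (\<lambda>x. c * rep a x) \<in> H)"

definition GQ_image :: "('o,'m,'x) tricat_scheme \<Rightarrow> 'o set \<Rightarrow> ('o \<Rightarrow> rat) set set" where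
  "GQ_image C D = (\<lambda>a. cls C (obj C) (rep a)) ` GQ C D"

definition I_H :: "('o,'m,'x) tricat_scheme \<Rightarrow> ('o \<Rightarrow> rat) set set \<Rightarrow> 'o set set" where
  "I_H C H = {D. dense_subcat C D \<and> GQ_image C D = H}"

end

theory Submission
  imports Defs
begin

text \<open>The maximal element is the set of objects whose class lies in H. The relations
  [X[1]] = -[X], [X] = [X'] for X \<cong> X' and [Y] = [X] + [Z] for a distinguished triangle
  X \<rightarrow> Y \<rightarrow> Z \<rightarrow> X[1] make it closed under shifts, isomorphisms and cones, and it is dense
  because the cone of the zero map U \<rightarrow> U is U \<oplus> U[1], of class 0. Its image in G(C)_Q is all
  of H because, by shifts and cones, every element of G(C)_Q is a positive rational multiple
  of the class of a single object. Conversely, every subcategory whose image is H consists of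
  objects with class in H, hence is contained in this one.\<close>

locale preadditive_cat =
  fixes C :: "('o,'m,'x) tricat_scheme"
  assumes preadditive: "is_preadditive C"
begin

lemma category: "is_category C"
  using preadditive by (simp add: is_preadditive_def)

lemma hom_obj_src: "f \<in> hom C X Y \<Longrightarrow> X \<in> obj C"
  and hom_obj_tgt: "f \<in> hom C X Y \<Longrightarrow> Y \<in> obj C"
  using category unfolding is_category_def hom_def by blast+

lemma cmp_hom:
  assumes "f \<in> hom C X Y" and "g \<in> hom C Y Z"
  shows "cmp C g f \<in> hom C X Z"
  using category assms hom_obj_src[OF assms(1)] hom_obj_src[OF assms(2)] hom_obj_tgt[OF assms(2)]
  unfolding is_category_def by blast

lemma idm_hom: "X \<in> obj C \<Longrightarrow> idm C X \<in> hom C X X"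
  using category unfolding is_category_def by blast

lemma cmp_assoc:
  assumes "f \<in> hom C W X" and "g \<in> hom C X Y" and "h \<in> hom C Y Z"
  shows "cmp C h (cmp C g f) = cmp C (cmp C h g) f"
  using category assms hom_obj_src[OF assms(1)] hom_obj_src[OF assms(2)] hom_obj_src[OF assms(3)]
    hom_obj_tgt[OF assms(3)]
  unfolding is_category_def by blast

lemma
  assumes "f \<in> hom C X Y"
  shows cmp_idm_right: "cmp C f (idm C X) = f" and cmp_idm_left: "cmp C (idm C Y) f = f"
  using category assms hom_obj_src[OF assms] hom_obj_tgt[OF assms]
  unfolding is_category_def by blast+

lemma zro_hom: "X \<in> obj C \<Longrightarrow> Y \<in> obj C \<Longrightarrow> zro C X Y \<in> hom C X Y"
  using preadditive unfolding is_preadditive_def by blast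

lemma
  assumes "f \<in> hom C X Y"
  shows ngt_hom: "ngt C f \<in> hom C X Y"
    and pls_zro_right: "pls C f (zro C X Y) = f"
    and pls_ngt_right: "pls C f (ngt C f) = zro C X Y"
  using preadditive assms hom_obj_src[OF assms] hom_obj_tgt[OF assms]
  unfolding is_preadditive_def by blast+

lemma
  assumes "f \<in> hom C X Y" and "g \<in> hom C X Y"
  shows pls_hom: "pls C f g \<in> hom C X Y" and pls_comm: "pls C f g = pls C g f"
  using preadditive assms hom_obj_src[OF assms(1)] hom_obj_tgt[OF assms(1)]
  unfolding is_preadditive_def by blast+

lemma pls_assoc:
  assumes "f \<in> hom C X Y" and "g \<in> hom C X Y" and "h \<in> hom C X Y"
  shows "pls C (pls C f g) h = pls C f (pls C g h)"
  using preadditive assms hom_obj_src[OF assms(1)] hom_obj_tgt[OF assms(1)]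
  unfolding is_preadditive_def by blast

lemma cmp_pls_left:
  assumes "f \<in> hom C X Y" and "g \<in> hom C Y Z" and "g' \<in> hom C Y Z"
  shows "cmp C (pls C g g') f = pls C (cmp C g f) (cmp C g' f)"
  using preadditive assms hom_obj_src[OF assms(1)] hom_obj_src[OF assms(2)] hom_obj_tgt[OF assms(2)]
  unfolding is_preadditive_def by blast

lemma cmp_pls_right:
  assumes "f \<in> hom C X Y" and "f' \<in> hom C X Y" and "g \<in> hom C Y Z"
  shows "cmp C g (pls C f f') = pls C (cmp C g f) (cmp C g f')"
  using preadditive assms hom_obj_src[OF assms(1)] hom_obj_src[OF assms(3)] hom_obj_tgt[OF assms(3)]
  unfolding is_preadditive_def by blast

lemma pls_zro_left: "f \<in> hom C X Y \<Longrightarrow> pls C (zro C X Y) f = f"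
  using pls_comm pls_zro_right zro_hom hom_obj_src hom_obj_tgt by metis

lemma idempotent_pls_eq_zro:
  assumes f: "f \<in> hom C X Y" and idem: "pls C f f = f"
  shows "f = zro C X Y"
proof -
  have "zro C X Y = pls C (pls C f f) (ngt C f)" using f idem by (simp add: pls_ngt_right)
  also have "\<dots> = f" using f by (simp add: pls_assoc ngt_hom pls_ngt_right pls_zro_right)
  finally show ?thesis by simp
qed

lemma ngt_unique:
  assumes f: "f \<in> hom C X Y" and g: "g \<in> hom C X Y" and sum: "pls C f g = zro C X Y"
  shows "g = ngt C f"
proof -
  have "g = pls C (pls C f g) (ngt C f)"
    using f g by (metis ngt_hom pls_assoc pls_comm pls_ngt_right pls_zro_right)
  then show ?thesis using f sum by (simp add: ngt_hom pls_zro_left)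
qed

lemma ngt_zro: "X \<in> obj C \<Longrightarrow> Y \<in> obj C \<Longrightarrow> ngt C (zro C X Y) = zro C X Y"
  using ngt_unique pls_zro_right zro_hom by metis

lemma eq_if_pls_ngt_eq_zro:
  assumes f: "f \<in> hom C X Y" and g: "g \<in> hom C X Y" and diff: "pls C f (ngt C g) = zro C X Y"
  shows "f = g"
proof -
  have "pls C (ngt C g) f = zro C X Y" using diff pls_comm[OF f ngt_hom[OF g]] by simp
  moreover have "pls C (ngt C g) g = zro C X Y"
    using pls_comm[OF g ngt_hom[OF g]] pls_ngt_right[OF g] by simp
  ultimately show ?thesis using f g ngt_hom ngt_unique by metis
qed

lemma cmp_zro_left:
  assumes f: "f \<in> hom C X Y" and Z: "Z \<in> obj C"
  shows "cmp C (zro C Y Z) f = zro C X Z"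
proof (rule idempotent_pls_eq_zro)
  have z: "zro C Y Z \<in> hom C Y Z" using f Z hom_obj_tgt zro_hom by blast
  then show "cmp C (zro C Y Z) f \<in> hom C X Z" using f cmp_hom by blast
  show "pls C (cmp C (zro C Y Z) f) (cmp C (zro C Y Z) f) = cmp C (zro C Y Z) f"
    using f z by (simp add: cmp_pls_left [symmetric] pls_zro_right)
qed

lemma cmp_zro_right:
  assumes g: "g \<in> hom C Y Z" and X: "X \<in> obj C"
  shows "cmp C g (zro C X Y) = zro C X Z"
proof (rule idempotent_pls_eq_zro)
  have z: "zro C X Y \<in> hom C X Y" using g X hom_obj_src zro_hom by blast
  then show "cmp C g (zro C X Y) \<in> hom C X Z" using g cmp_hom by blast
  show "pls C (cmp C g (zro C X Y)) (cmp C g (zro C X Y)) = cmp C g (zro C X Y)"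
    using g z by (simp add: cmp_pls_right [symmetric] pls_zro_right)
qed

lemma cmp_ngt_left:
  assumes f: "f \<in> hom C X Y" and g: "g \<in> hom C Y Z"
  shows "cmp C (ngt C g) f = ngt C (cmp C g f)"
proof (rule ngt_unique)
  show "pls C (cmp C g f) (cmp C (ngt C g) f) = zro C X Z"
    using f g cmp_zro_left[OF f hom_obj_tgt[OF g]]
    by (simp add: cmp_pls_left [symmetric] ngt_hom pls_ngt_right)
qed (use f g in \<open>auto intro: cmp_hom ngt_hom\<close>)

lemma cmp_ngt_right:
  assumes f: "f \<in> hom C X Y" and g: "g \<in> hom C Y Z"
  shows "cmp C g (ngt C f) = ngt C (cmp C g f)"
proof (rule ngt_unique)
  show "pls C (cmp C g f) (cmp C g (ngt C f)) = zro C X Z"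
    using f g cmp_zro_right[OF g hom_obj_src[OF f]]
    by (simp add: cmp_pls_right [symmetric] ngt_hom pls_ngt_right)
qed (use f g in \<open>auto intro: cmp_hom ngt_hom\<close>)

lemma biprod_if_split_epi:
  assumes g: "g \<in> hom C U Z" and h: "h \<in> hom C Z S" and p: "p \<in> hom C Z U" and i: "i \<in> hom C S Z"
    and pg: "cmp C p g = idm C U" and hg: "cmp C h g = zro C U S"
    and ih: "cmp C i h = pls C (idm C Z) (ngt C (cmp C g p))"
    and h_epi: "\<And>b b' V. b \<in> hom C S V \<Longrightarrow> b' \<in> hom C S V \<Longrightarrow> cmp C b h = cmp C b' h \<Longrightarrow> b = b'"
  shows "is_biprod C U S Z"
proof -
  have U: "U \<in> obj C" and Z: "Z \<in> obj C" and S: "S \<in> obj C"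
    using g h hom_obj_src hom_obj_tgt by blast+
  have gp: "cmp C g p \<in> hom C Z Z" using p g by (rule cmp_hom)
  have "cmp C h (cmp C g p) = zro C Z S" using cmp_assoc[OF p g h] hg cmp_zro_left[OF p S] by simp
  then have "cmp C (cmp C h i) h = cmp C (idm C S) h"
    unfolding cmp_assoc[OF h i h, symmetric] ih using h gp idm_hom[OF Z] Z S
    by (simp add: cmp_pls_right ngt_hom cmp_ngt_right cmp_idm_right cmp_idm_left ngt_zro
        pls_zro_right)
  then have hi: "cmp C h i = idm C S" using h_epi[OF cmp_hom[OF i h] idm_hom[OF S]] by blast
  have "cmp C p (cmp C g p) = p" using cmp_assoc[OF p g p] pg cmp_idm_left[OF p] by simp
  then have "cmp C (cmp C p i) h = cmp C (zro C S U) h"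
    unfolding cmp_assoc[OF h i p, symmetric] ih using p gp idm_hom[OF Z] cmp_zro_left[OF h U]
    by (simp add: cmp_pls_right ngt_hom cmp_ngt_right cmp_idm_right pls_ngt_right)
  then have pi: "cmp C p i = zro C S U" using h_epi[OF cmp_hom[OF i p] zro_hom[OF S U]] by blast
  have "pls C (cmp C g p) (cmp C i h) = pls C (idm C Z) (pls C (ngt C (cmp C g p)) (cmp C g p))"
    unfolding ih using gp idm_hom[OF Z] ngt_hom[OF gp] pls_hom[OF idm_hom[OF Z] ngt_hom[OF gp]]
    by (simp add: pls_comm[of "cmp C g p"] pls_assoc)
  then have "pls C (cmp C g p) (cmp C i h) = idm C Z"
    using pls_comm[OF ngt_hom[OF gp] gp] pls_ngt_right[OF gp] pls_zro_right[OF idm_hom[OF Z]]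
    by simp
  then show ?thesis unfolding is_biprod_def using Z g i p h pg hi pi hg by blast
qed

end


locale triangulated_cat =
  fixes C :: "('o,'m,'x) tricat_scheme"
  assumes triangulated: "triangulated C"

sublocale triangulated_cat \<subseteq> preadditive_cat
  using triangulated by unfold_locales (simp add: triangulated_def is_additive_def)

context triangulated_cat
begin

lemma shift: "is_shift C"
  using triangulated by (simp add: triangulated_def)

lemma shO_obj: "X \<in> obj C \<Longrightarrow> shO C X \<in> obj C"
  using shift unfolding is_shift_def by blast

lemma shM_hom: "f \<in> hom C X Y \<Longrightarrow> shM C f \<in> hom C (shO C X) (shO C Y)"
  using shift hom_obj_src hom_obj_tgt unfolding is_shift_def bij_betw_def by blast

lemma shM_idm: "X \<in> obj C \<Longrightarrow> shM C (idm C X) = idm C (shO C X)"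
  using shift unfolding is_shift_def by blast

lemma shM_pls: "f \<in> hom C X Y \<Longrightarrow> g \<in> hom C X Y \<Longrightarrow> shM C (pls C f g) = pls C (shM C f) (shM C g)"
  using shift hom_obj_src hom_obj_tgt unfolding is_shift_def by blast

lemma shM_zro:
  assumes X: "X \<in> obj C" and Y: "Y \<in> obj C"
  shows "shM C (zro C X Y) = zro C (shO C X) (shO C Y)"
proof (rule idempotent_pls_eq_zro)
  have z: "zro C X Y \<in> hom C X Y" using X Y by (rule zro_hom)
  then show "shM C (zro C X Y) \<in> hom C (shO C X) (shO C Y)" by (rule shM_hom)
  show "pls C (shM C (zro C X Y)) (shM C (zro C X Y)) = shM C (zro C X Y)"
    using z by (simp add: shM_pls [symmetric] pls_zro_right)
qed

lemma shO_essentially_surj: "Y \<in> obj C \<Longrightarrow> \<exists>X \<in> obj C. isomorphic C (shO C X) Y"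
  using shift unfolding is_shift_def by blast

lemma ex_zero_obj: "\<exists>Z. is_zero_obj C Z"
  using triangulated by (simp add: triangulated_def is_additive_def)

lemma zero_obj_obj: "is_zero_obj C Z \<Longrightarrow> Z \<in> obj C"
  by (simp add: is_zero_obj_def)

lemma zero_obj_shO: "is_zero_obj C Z \<Longrightarrow> is_zero_obj C (shO C Z)"
  unfolding is_zero_obj_def using shM_idm shM_zro shO_obj by metis

lemma dist_hom:
  assumes "(f, g, h) \<in> dist C"
  shows "f \<in> hom C (src C f) (tgt C f)" and "g \<in> hom C (tgt C f) (tgt C g)"
    and "h \<in> hom C (tgt C g) (shO C (src C f))"
  using triangulated assms unfolding triangulated_def is_triangle_def hom_def by auto

lemma dist_obj:
  assumes "(f, g, h) \<in> dist C"
  shows "src C f \<in> obj C" and "tgt C f \<in> obj C" and "tgt C g \<in> obj C"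
  using dist_hom[OF assms] hom_obj_src hom_obj_tgt by blast+

lemma dist_src:
  assumes "(f, g, h) \<in> dist C"
  shows "src C g = tgt C f" and "src C h = tgt C g"
  using dist_hom[OF assms] unfolding hom_def by auto

lemma dist_idm_zro: "X \<in> obj C \<Longrightarrow> is_zero_obj C Z \<Longrightarrow> (idm C X, zro C X Z, zro C Z (shO C X)) \<in> dist C"
  using triangulated unfolding triangulated_def TR1_def by blast

lemma dist_ex_cone: "f \<in> mor C \<Longrightarrow> \<exists>g h. (f, g, h) \<in> dist C"
  using triangulated unfolding triangulated_def TR1_def by blast

lemma dist_rotate: "(f, g, h) \<in> dist C \<Longrightarrow> (g, h, ngt C (shM C f)) \<in> dist C"
  using triangulated unfolding triangulated_def TR2_def by blast

lemma dist_morphism_ext: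
  "(f, g, h) \<in> dist C \<Longrightarrow> (f', g', h') \<in> dist C \<Longrightarrow>
    u \<in> hom C (src C f) (src C f') \<Longrightarrow> v \<in> hom C (src C g) (src C g') \<Longrightarrow>
    cmp C v f = cmp C f' u \<Longrightarrow>
    \<exists>w \<in> hom C (src C h) (src C h'). cmp C w g = cmp C g' v \<and> cmp C (shM C u) h = cmp C h' w"
  using triangulated unfolding triangulated_def TR3_def by blast

lemma dist_zro_idm:
  assumes V: "V \<in> obj C" and Z: "is_zero_obj C Z"
  shows "(zro C Z V, idm C V, zro C V (shO C Z)) \<in> dist C"
proof -
  have Z': "Z \<in> obj C" using Z by (rule zero_obj_obj)
  have "(idm C V, zro C V (shO C Z), ngt C (shM C (zro C Z V))) \<in> dist C"
    using dist_idm_zro[OF V zero_obj_shO[OF Z]] Z' V by (simp add: shM_zro ngt_zro shO_obj)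
  moreover have "is_triangle C (zro C Z V, idm C V, zro C V (shO C Z))"
    using zro_hom[OF Z' V] idm_hom[OF V] zro_hom[OF V shO_obj[OF Z']]
    unfolding is_triangle_def hom_def by simp
  ultimately show ?thesis
    using triangulated unfolding triangulated_def TR2_def by blast
qed

lemma dist_cmp_zro:
  assumes T: "(f, g, h) \<in> dist C"
  shows "cmp C g f = zro C (src C f) (tgt C g)"
proof -
  obtain Z where Z: "is_zero_obj C Z" using ex_zero_obj by blast
  define X where "X = src C f"
  have X: "X \<in> obj C" and Z': "Z \<in> obj C"
    using dist_obj[OF T] zero_obj_obj[OF Z] by (auto simp: X_def)
  note S = dist_idm_zro[OF X Z]
  have "idm C X \<in> hom C (src C (idm C X)) (src C f)" and "f \<in> hom C (src C (zro C X Z)) (src C g)"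
    using idm_hom[OF X] zro_hom[OF X Z'] dist_hom(1)[OF T] dist_src(1)[OF T]
    unfolding hom_def X_def by auto
  then obtain w where w: "w \<in> hom C (src C (zro C Z (shO C X))) (src C h)"
    and wg: "cmp C w (zro C X Z) = cmp C g f"
    using dist_morphism_ext[OF S T] by blast
  have "w \<in> hom C Z (tgt C g)"
    using w zro_hom[OF Z' shO_obj[OF X]] dist_src(2)[OF T] by (simp add: hom_def)
  then show ?thesis using wg cmp_zro_right[OF _ X] X_def by metis
qed

lemma dist_weak_cokernel:
  assumes T: "(f, g, h) \<in> dist C" and a: "a \<in> hom C (tgt C f) V"
    and af: "cmp C a f = zro C (src C f) V"
  shows "\<exists>c \<in> hom C (tgt C g) V. cmp C c g = a"
proof -
  obtain Z where Z: "is_zero_obj C Z" using ex_zero_obj by blast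
  have Z': "Z \<in> obj C" using Z by (rule zero_obj_obj)
  have X: "src C f \<in> obj C" and V: "V \<in> obj C" using dist_obj[OF T] a hom_obj_tgt by blast+
  note S = dist_zro_idm[OF V Z]
  have "zro C (src C f) Z \<in> hom C (src C f) (src C (zro C Z V))"
    and "a \<in> hom C (src C g) (src C (idm C V))"
    using zro_hom[OF X Z'] zro_hom[OF Z' V] idm_hom[OF V] a dist_src[OF T] unfolding hom_def by auto
  moreover have "cmp C a f = cmp C (zro C Z V) (zro C (src C f) Z)"
    using af cmp_zro_left[OF zro_hom[OF X Z'] V] by simp
  ultimately obtain w where "w \<in> hom C (src C h) (src C (zro C V (shO C Z)))"
    and "cmp C w g = cmp C (idm C V) a"
    using dist_morphism_ext[OF T S] by blast
  then show ?thesis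
    using cmp_idm_left[OF a] zro_hom[OF V shO_obj[OF Z']] dist_src[OF T] unfolding hom_def by auto
qed

lemma dist_cancel_right_if_zro:
  assumes T: "(f, g, h) \<in> dist C" and g: "g = zro C (tgt C f) (tgt C g)"
    and b: "b \<in> hom C (tgt C f) V" and b': "b' \<in> hom C (tgt C f) V"
    and eq: "cmp C b f = cmp C b' f"
  shows "b = b'"
proof -
  define d where "d = pls C b (ngt C b')"
  have d: "d \<in> hom C (tgt C f) V" unfolding d_def using b b' by (intro pls_hom ngt_hom)
  note f = dist_hom(1)[OF T]
  have "cmp C d f = pls C (cmp C b' f) (ngt C (cmp C b' f))"
    unfolding d_def using f b b' eq by (simp add: cmp_pls_left ngt_hom cmp_ngt_left)
  then have "cmp C d f = zro C (src C f) V" using pls_ngt_right cmp_hom[OF f b'] by simp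
  then obtain c where c: "c \<in> hom C (tgt C g) V" "cmp C c g = d"
    using dist_weak_cokernel[OF T d] by blast
  have "d = zro C (tgt C f) V" using c cmp_zro_right dist_obj(2)[OF T] g by metis
  then show ?thesis using eq_if_pls_ngt_eq_zro[OF b b'] d_def by simp
qed

lemma dist_zro_cone_biprod:
  assumes U: "U \<in> obj C" and T: "(zro C U U, g, h) \<in> dist C"
  shows "is_biprod C U (shO C U) (tgt C g)"
proof -
  define Z S where "Z = tgt C g" and "S = shO C U"
  have zUU: "zro C U U \<in> hom C U U" using U U by (rule zro_hom)
  then have g: "g \<in> hom C U Z" and h: "h \<in> hom C Z S"
    using dist_hom[OF T] unfolding Z_def S_def hom_def by auto
  have Z: "Z \<in> obj C" and S: "S \<in> obj C" using h hom_obj_src hom_obj_tgt by blast+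
  have srcs: "src C g = U" "tgt C g = Z" "src C h = Z" "tgt C h = S"
    using g h unfolding hom_def by auto
  have T1: "(g, h, zro C S S) \<in> dist C"
    using dist_rotate[OF T] U by (simp add: shM_zro ngt_zro shO_obj S_def)
  have T2: "(h, zro C S S, ngt C (shM C g)) \<in> dist C" using dist_rotate[OF T1] .
  have hg: "cmp C h g = zro C U S" using dist_cmp_zro[OF T1] srcs by simp
  have h_epi: "b = b'" if "b \<in> hom C S V" "b' \<in> hom C S V" "cmp C b h = cmp C b' h" for b b' V
    using dist_cancel_right_if_zro[OF T2] that srcs zro_hom[OF S S] by (simp add: hom_def)
  obtain p where p: "p \<in> hom C Z U" and pg: "cmp C p g = idm C U"
    using dist_weak_cokernel[OF T, of "idm C U"] idm_hom[OF U] cmp_idm_left[OF zUU] zUU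
    unfolding hom_def Z_def by auto
  have gp: "cmp C g p \<in> hom C Z Z" using p g by (rule cmp_hom)
  \<comment> \<open>id - g p kills g, so it factors through h; the factor is the second inclusion.\<close>
  define a where "a = pls C (idm C Z) (ngt C (cmp C g p))"
  have a: "a \<in> hom C (tgt C g) Z"
    unfolding a_def srcs using idm_hom[OF Z] gp by (intro pls_hom ngt_hom)
  have "cmp C (cmp C g p) g = g" using cmp_assoc[OF g p g] pg cmp_idm_right[OF g] by simp
  then have "cmp C a g = pls C g (ngt C g)"
    unfolding a_def using g gp idm_hom[OF Z]
    by (simp add: cmp_pls_left ngt_hom cmp_ngt_left cmp_idm_left)
  then have "cmp C a g = zro C (src C g) Z" using pls_ngt_right[OF g] srcs by simp
  then obtain i where i: "i \<in> hom C S Z" and ih: "cmp C i h = a"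
    using dist_weak_cokernel[OF T1 a] srcs by metis
  show ?thesis
    unfolding Z_def[symmetric] S_def[symmetric]
    using h_epi by (rule biprod_if_split_epi[OF g h p i pg hg ih[unfolded a_def]])
qed

end


section \<open>Finitely supported rational vectors modulo relations\<close>

lemma fvec_zero: "(\<lambda>_. 0) \<in> fvec S"
  by (simp add: fvec_def)

lemma fvec_add:
  assumes "a \<in> fvec S" and "b \<in> fvec S"
  shows "(\<lambda>x. a x + b x) \<in> fvec S"
proof -
  have "{x. a x + b x \<noteq> 0} \<subseteq> {x. a x \<noteq> 0} \<union> {x. b x \<noteq> 0}" by auto
  with assms show ?thesis unfolding fvec_def by (auto dest: finite_subset)
qed

lemma fvec_smult: "a \<in> fvec S \<Longrightarrow> (\<lambda>x. c * a x) \<in> fvec S"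
  unfolding fvec_def by (auto elim: rev_finite_subset)

lemma fvec_delta: "X \<in> S \<Longrightarrow> delta X \<in> fvec S"
  unfolding fvec_def delta_def by (auto elim: rev_finite_subset[of "{X}"])

lemma fvec_mono: "S \<subseteq> T \<Longrightarrow> fvec S \<subseteq> fvec T"
  unfolding fvec_def by auto

lemma fvec_induct [consumes 1, case_names zero add]:
  assumes u: "u \<in> fvec S" and zero: "P (\<lambda>_. 0)"
    and add: "\<And>v y c. v \<in> fvec S \<Longrightarrow> y \<in> S \<Longrightarrow> P v \<Longrightarrow> P (\<lambda>x. v x + c * delta y x)"
  shows "P u"
proof -
  have "P u" if "finite F" "u \<in> fvec S" "{x. u x \<noteq> 0} \<subseteq> F" for F u
    using that
  proof (induction F arbitrary: u rule: finite_induct)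
    case empty
    then have "u = (\<lambda>_. 0)" by auto
    then show ?case using zero by simp
  next
    case (insert y F)
    define v where "v = u(y := 0)"
    have v: "v \<in> fvec S"
      using insert.prems(1) unfolding v_def fvec_def by (auto elim: rev_finite_subset)
    have "{x. v x \<noteq> 0} \<subseteq> F" using insert.prems(2) unfolding v_def by auto
    with v have "P v" by (rule insert.IH)
    show ?case
    proof (cases "u y = 0")
      case True
      then show ?thesis using \<open>P v\<close> unfolding v_def by (simp add: fun_upd_idem)
    next
      case False
      then have "y \<in> S" using insert.prems(1) unfolding fvec_def by blast
      moreover have "u = (\<lambda>x. v x + u y * delta y x)" unfolding v_def delta_def by auto
      ultimately show ?thesis using add[OF v _ \<open>P v\<close>] by metis
    qed
  qed
  with u show ?thesis unfolding fvec_def by blast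
qed

lemma qspan_mono: "B \<subseteq> B' \<Longrightarrow> qspan B \<subseteq> qspan B'"
proof
  fix a assume B: "B \<subseteq> B'" and "a \<in> qspan B"
  from this(2) show "a \<in> qspan B'"
    by (induction rule: qspan.induct) (use B in \<open>auto intro: qspan.intros\<close>)
qed

definition span_cong :: "('o \<Rightarrow> rat) set \<Rightarrow> ('o \<Rightarrow> rat) \<Rightarrow> ('o \<Rightarrow> rat) \<Rightarrow> bool" where
  "span_cong B v w \<longleftrightarrow> (\<lambda>x. v x - w x) \<in> qspan B"

lemma span_cong_refl: "span_cong B v v"
  unfolding span_cong_def using qspan.zero by simp

lemma span_cong_sym: "span_cong B v w \<Longrightarrow> span_cong B w v"
  unfolding span_cong_def using qspan.smult[of _ B "-1"] by fastforce

lemma span_cong_trans: "span_cong B u v \<Longrightarrow> span_cong B v w \<Longrightarrow> span_cong B u w"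
  unfolding span_cong_def using qspan.add by fastforce

lemma span_cong_add:
  "span_cong B a b \<Longrightarrow> span_cong B c d \<Longrightarrow> span_cong B (\<lambda>x. a x + c x) (\<lambda>x. b x + d x)"
  unfolding span_cong_def using qspan.add[of "\<lambda>x. a x - b x" B "\<lambda>x. c x - d x"]
  by (simp add: algebra_simps)

lemma span_cong_smult: "span_cong B a b \<Longrightarrow> span_cong B (\<lambda>x. c * a x) (\<lambda>x. c * b x)"
  unfolding span_cong_def using qspan.smult[of "\<lambda>x. a x - b x" B c]
  by (simp add: algebra_simps)

lemma span_cong_mono: "span_cong B a b \<Longrightarrow> B \<subseteq> B' \<Longrightarrow> span_cong B' a b"
  unfolding span_cong_def using qspan_mono by blast

lemma span_cong_gen: "(\<lambda>x. v x - w x) \<in> B \<Longrightarrow> span_cong B v w"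
  unfolding span_cong_def by (rule qspan.gen)

lemma cls_eq_iff:
  assumes "v \<in> fvec S" and "w \<in> fvec S"
  shows "cls C S v = cls C S w \<longleftrightarrow> span_cong (relgens C S) v w"
proof
  assume "cls C S v = cls C S w"
  moreover have "v \<in> cls C S v"
    using assms(1) span_cong_refl unfolding cls_def span_cong_def by simp
  ultimately show "span_cong (relgens C S) v w" unfolding cls_def span_cong_def by simp
next
  assume "span_cong (relgens C S) v w"
  then show "cls C S v = cls C S w"
    unfolding cls_def span_cong_def[symmetric] using span_cong_trans span_cong_sym by blast
qed

lemma rep_cls:
  assumes "v \<in> fvec S"
  shows "rep (cls C S v) \<in> fvec S" and "span_cong (relgens C S) (rep (cls C S v)) v"
proof -
  have "v \<in> cls C S v" using assms span_cong_refl unfolding cls_def span_cong_def by simp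
  then have "rep (cls C S v) \<in> cls C S v" unfolding rep_def by (metis someI)
  then show "rep (cls C S v) \<in> fvec S" and "span_cong (relgens C S) (rep (cls C S v)) v"
    unfolding cls_def span_cong_def by auto
qed

lemma relgens_mono: "S \<subseteq> T \<Longrightarrow> relgens C S \<subseteq> relgens C T"
  unfolding relgens_def by blast

lemma GQ_image_eq:
  assumes D: "D \<subseteq> obj C"
  shows "GQ_image C D = cls C (obj C) ` fvec D"
proof -
  have "cls C (obj C) (rep (cls C D v)) = cls C (obj C) v" if v: "v \<in> fvec D" for v
  proof (subst cls_eq_iff)
    show "span_cong (relgens C (obj C)) (rep (cls C D v)) v"
      using span_cong_mono[OF rep_cls(2)[OF v] relgens_mono[OF D]] .
  qed (use rep_cls(1)[OF v] v fvec_mono[OF D] in auto)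
  then show ?thesis unfolding GQ_image_def GQ_def image_image by (simp cong: image_cong)
qed


section \<open>Relations between classes of objects\<close>

context triangulated_cat
begin

abbreviation class_cong :: "('o \<Rightarrow> rat) \<Rightarrow> ('o \<Rightarrow> rat) \<Rightarrow> bool" where
  "class_cong \<equiv> span_cong (relgens C (obj C))"

lemma class_cong_dist:
  assumes T: "(f, g, h) \<in> dist C"
  shows "class_cong (\<lambda>x. delta (src C f) x + delta (tgt C g) x) (delta (tgt C f))"
proof -
  have "(\<lambda>x. delta (src C f) x - delta (tgt C f) x + delta (tgt C g) x) \<in> relgens C (obj C)"
    unfolding relgens_def using T dist_obj[OF T] by blast
  then show ?thesis by (intro span_cong_gen) (simp add: algebra_simps)
qed

lemma class_cong_iso: "isomorphic C X Y \<Longrightarrow> class_cong (delta X) (delta Y)"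
  by (rule span_cong_gen) (auto simp: relgens_def isomorphic_def)

lemma class_cong_zero_obj:
  assumes Z: "is_zero_obj C Z"
  shows "class_cong (delta Z) (\<lambda>_. 0)"
proof -
  have Z': "Z \<in> obj C" using Z by (rule zero_obj_obj)
  have "class_cong (\<lambda>x. delta Z x + delta Z x) (delta Z)"
    using class_cong_dist[OF dist_idm_zro[OF Z' Z]] idm_hom[OF Z'] zro_hom[OF Z' Z']
    by (simp add: hom_def)
  from span_cong_add[OF this span_cong_refl[of _ "\<lambda>x. - delta Z x"]] show ?thesis by simp
qed

lemma class_cong_shO:
  assumes X: "X \<in> obj C"
  shows "class_cong (delta (shO C X)) (\<lambda>x. - delta X x)"
proof -
  obtain Z where Z: "is_zero_obj C Z" using ex_zero_obj by blast
  have Z': "Z \<in> obj C" using Z by (rule zero_obj_obj)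
  have "class_cong (\<lambda>x. delta X x + delta (shO C X) x) (delta Z)"
    using class_cong_dist[OF dist_rotate[OF dist_idm_zro[OF X Z]]]
      zro_hom[OF X Z'] zro_hom[OF Z' shO_obj[OF X]]
    by (simp add: hom_def)
  then have "class_cong (\<lambda>x. delta X x + delta (shO C X) x) (\<lambda>_. 0)"
    using class_cong_zero_obj[OF Z] by (rule span_cong_trans)
  from span_cong_add[OF this span_cong_refl[of _ "\<lambda>x. - delta X x"]] show ?thesis by simp
qed

lemma ex_obj_class_sum:
  assumes X: "X \<in> obj C" and Y: "Y \<in> obj C"
  shows "\<exists>Z \<in> obj C. class_cong (delta Z) (\<lambda>x. delta X x + delta Y x)"
proof -
  obtain A where A: "A \<in> obj C" and AX: "isomorphic C (shO C A) X"
    using shO_essentially_surj[OF X] by blast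
  have zAY: "zro C A Y \<in> hom C A Y" using A Y by (rule zro_hom)
  then obtain g h where T: "(zro C A Y, g, h) \<in> dist C"
    using dist_ex_cone unfolding hom_def by blast
  have "class_cong (\<lambda>x. delta A x + delta (tgt C g) x) (delta Y)"
    using class_cong_dist[OF T] zAY by (simp add: hom_def)
  moreover have "class_cong (\<lambda>x. - delta A x) (delta X)"
    using span_cong_sym[OF class_cong_shO[OF A]] class_cong_iso[OF AX] by (rule span_cong_trans)
  ultimately have "class_cong (\<lambda>x. delta A x + delta (tgt C g) x + - delta A x)
      (\<lambda>x. delta Y x + delta X x)"
    by (rule span_cong_add)
  then have "class_cong (delta (tgt C g)) (\<lambda>x. delta X x + delta Y x)"
    by (simp add: add.commute)
  then show ?thesis using dist_obj(3)[OF T] by blast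
qed

lemma ex_obj_class_nat_mult:
  assumes X: "X \<in> obj C"
  shows "\<exists>Y \<in> obj C. class_cong (\<lambda>x. of_nat n * delta X x) (delta Y)"
proof (induction n)
  case 0
  obtain Z where Z: "is_zero_obj C Z" using ex_zero_obj by blast
  then show ?case using span_cong_sym[OF class_cong_zero_obj[OF Z]] zero_obj_obj by auto
next
  case (Suc n)
  then obtain Y where Y: "Y \<in> obj C" "class_cong (\<lambda>x. of_nat n * delta X x) (delta Y)" by blast
  obtain W where W: "W \<in> obj C" "class_cong (delta W) (\<lambda>x. delta Y x + delta X x)"
    using ex_obj_class_sum[OF Y(1) X] by blast
  have "class_cong (\<lambda>x. of_nat n * delta X x + delta X x) (\<lambda>x. delta Y x + delta X x)"
    using Y(2) span_cong_refl by (rule span_cong_add)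
  moreover have "(\<lambda>x. of_nat n * delta X x + delta X x) = (\<lambda>x. of_nat (Suc n) * delta X x)"
    by (simp add: algebra_simps)
  ultimately have "class_cong (\<lambda>x. of_nat (Suc n) * delta X x) (delta W)"
    using span_cong_trans[OF _ span_cong_sym[OF W(2)]] by simp
  then show ?case using W(1) by blast
qed

lemma ex_obj_class_int_mult:
  assumes X: "X \<in> obj C"
  shows "\<exists>Y \<in> obj C. class_cong (\<lambda>x. of_int k * delta X x) (delta Y)"
proof (cases "k \<ge> 0")
  case True
  then obtain n where "k = int n" using nonneg_int_cases by blast
  then show ?thesis using ex_obj_class_nat_mult[OF X, of n] by simp
next
  case False
  define n where "n = nat (- k)"
  then have k: "k = - int n" using False by simp
  obtain Y where Y: "Y \<in> obj C" "class_cong (\<lambda>x. of_nat n * delta X x) (delta Y)"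
    using ex_obj_class_nat_mult[OF X] by blast
  have "class_cong (\<lambda>x. of_int k * delta X x) (\<lambda>x. - delta Y x)"
    using span_cong_smult[OF Y(2), of "-1"] by (simp add: k)
  then have "class_cong (\<lambda>x. of_int k * delta X x) (delta (shO C Y))"
    using span_cong_sym[OF class_cong_shO[OF Y(1)]] by (rule span_cong_trans)
  then show ?thesis using shO_obj[OF Y(1)] by blast
qed

lemma ex_obj_class_multiple:
  assumes "u \<in> fvec (obj C)"
  shows "\<exists>X \<in> obj C. \<exists>n::nat. n > 0 \<and> class_cong (\<lambda>x. of_nat n * u x) (delta X)"
  using assms
proof (induction rule: fvec_induct)
  case zero
  obtain Z where Z: "is_zero_obj C Z" using ex_zero_obj by blast
  then show ?case using span_cong_sym[OF class_cong_zero_obj[OF Z]] zero_obj_obj[OF Z] by force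
next
  case (add v y c)
  then obtain X n where X: "X \<in> obj C" and n: "n > 0"
    and vX: "class_cong (\<lambda>x. of_nat n * v x) (delta X)" by blast
  obtain a d where ad: "quotient_of c = (a, d)" by (cases "quotient_of c")
  have d: "d > 0" using ad by (rule quotient_of_denom_pos)
  have c: "c = of_int a / of_int d" using ad by (rule quotient_of_div)
  obtain X1 where X1: "X1 \<in> obj C" "class_cong (\<lambda>x. of_int d * delta X x) (delta X1)"
    using ex_obj_class_int_mult[OF X] by blast
  obtain Y1 where Y1: "Y1 \<in> obj C" "class_cong (\<lambda>x. of_int (int n * a) * delta y x) (delta Y1)"
    using ex_obj_class_int_mult[OF add.hyps(2)] by blast
  obtain W where W: "W \<in> obj C" "class_cong (delta W) (\<lambda>x. delta X1 x + delta Y1 x)"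
    using ex_obj_class_sum[OF X1(1) Y1(1)] by blast
  have "class_cong (\<lambda>x. of_int d * (of_nat n * v x)) (delta X1)"
    using span_cong_smult[OF vX] X1(2) by (rule span_cong_trans)
  from span_cong_add[OF this Y1(2)] span_cong_sym[OF W(2)]
  have "class_cong (\<lambda>x. of_int d * (of_nat n * v x) + of_int (int n * a) * delta y x) (delta W)"
    by (rule span_cong_trans)
  moreover have "(\<lambda>x. of_int d * (of_nat n * v x) + of_int (int n * a) * delta y x) =
      (\<lambda>x. of_nat (n * nat d) * (v x + c * delta y x))"
    using d by (auto simp: c field_simps)
  ultimately show ?case using W(1) n d by (metis nat_0_less_mult_iff zero_less_nat_eq)
qed

end


section \<open>Objects whose class lies in a given subspace\<close>

text \<open>GQ_subspace only speaks about the representatives chosen by rep; the closure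
  properties hold for arbitrary representatives.\<close>

lemma GQ_subspace_add:
  assumes H: "GQ_subspace C H" and v: "v \<in> fvec (obj C)" and w: "w \<in> fvec (obj C)"
    and "cls C (obj C) v \<in> H" and "cls C (obj C) w \<in> H"
  shows "cls C (obj C) (\<lambda>x. v x + w x) \<in> H"
proof -
  let ?rv = "rep (cls C (obj C) v)" and ?rw = "rep (cls C (obj C) w)"
  have "cls C (obj C) (\<lambda>x. ?rv x + ?rw x) \<in> H"
    using H assms(4,5) unfolding GQ_subspace_def by blast
  moreover have "cls C (obj C) (\<lambda>x. ?rv x + ?rw x) = cls C (obj C) (\<lambda>x. v x + w x)"
  proof (rule iffD2[OF cls_eq_iff])
    show "(\<lambda>x. ?rv x + ?rw x) \<in> fvec (obj C)" using rep_cls(1)[OF v] rep_cls(1)[OF w] by (rule fvec_add)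
    show "(\<lambda>x. v x + w x) \<in> fvec (obj C)" using v w by (rule fvec_add)
    show "span_cong (relgens C (obj C)) (\<lambda>x. ?rv x + ?rw x) (\<lambda>x. v x + w x)"
      using rep_cls(2)[OF v] rep_cls(2)[OF w] by (rule span_cong_add)
  qed
  ultimately show ?thesis by simp
qed

lemma GQ_subspace_smult:
  assumes H: "GQ_subspace C H" and v: "v \<in> fvec (obj C)" and "cls C (obj C) v \<in> H"
  shows "cls C (obj C) (\<lambda>x. c * v x) \<in> H"
proof -
  let ?rv = "rep (cls C (obj C) v)"
  have "cls C (obj C) (\<lambda>x. c * ?rv x) \<in> H"
    using H assms(3) unfolding GQ_subspace_def by blast
  moreover have "cls C (obj C) (\<lambda>x. c * ?rv x) = cls C (obj C) (\<lambda>x. c * v x)"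
  proof (rule iffD2[OF cls_eq_iff])
    show "(\<lambda>x. c * ?rv x) \<in> fvec (obj C)" using rep_cls(1)[OF v] by (rule fvec_smult)
    show "(\<lambda>x. c * v x) \<in> fvec (obj C)" using v by (rule fvec_smult)
    show "span_cong (relgens C (obj C)) (\<lambda>x. c * ?rv x) (\<lambda>x. c * v x)"
      using rep_cls(2)[OF v] by (rule span_cong_smult)
  qed
  ultimately show ?thesis by simp
qed

definition class_preimage :: "('o,'m,'x) tricat_scheme \<Rightarrow> ('o \<Rightarrow> rat) set set \<Rightarrow> 'o set" where
  "class_preimage C H = {X \<in> obj C. cls C (obj C) (delta X) \<in> H}"

lemma class_preimage_subset: "class_preimage C H \<subseteq> obj C"
  unfolding class_preimage_def by blast

lemma GQ_image_subset_class_preimage: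
  assumes "D \<subseteq> obj C" and "GQ_image C D = H"
  shows "D \<subseteq> class_preimage C H"
proof
  fix X assume X: "X \<in> D"
  then have "cls C (obj C) (delta X) \<in> cls C (obj C) ` fvec D" by (intro imageI fvec_delta)
  then have "cls C (obj C) (delta X) \<in> H" using GQ_image_eq[OF assms(1)] assms(2) by simp
  then show "X \<in> class_preimage C H" using X assms(1) unfolding class_preimage_def by blast
qed

locale triangulated_cat_GQ_subspace = triangulated_cat +
  fixes H
  assumes subspace: "GQ_subspace C H"
begin

lemma zero_in_subspace: "cls C (obj C) (\<lambda>_. 0) \<in> H"
  using subspace unfolding GQ_subspace_def by blast

lemma class_preimage_if_class_cong:
  assumes v: "v \<in> fvec (obj C)" and "cls C (obj C) v \<in> H"
    and Y: "Y \<in> obj C" and "class_cong (delta Y) v"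
  shows "Y \<in> class_preimage C H"
proof -
  have "cls C (obj C) (delta Y) = cls C (obj C) v"
    using iffD2[OF cls_eq_iff[OF fvec_delta[OF Y] v] assms(4)] .
  then show ?thesis using assms(2) Y unfolding class_preimage_def by simp
qed

lemma class_preimage_neg:
  assumes "X \<in> class_preimage C H"
  shows "cls C (obj C) (\<lambda>x. - delta X x) \<in> H"
proof -
  have "X \<in> obj C" and "cls C (obj C) (delta X) \<in> H"
    using assms unfolding class_preimage_def by auto
  from GQ_subspace_smult[OF subspace fvec_delta[OF this(1)] this(2), of "-1"] show ?thesis by simp
qed

lemma class_preimage_iso:
  assumes "X \<in> class_preimage C H" and XY: "isomorphic C X Y"
  shows "Y \<in> class_preimage C H"
  using assms class_preimage_if_class_cong[OF fvec_delta] span_cong_sym[OF class_cong_iso[OF XY]]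
  unfolding isomorphic_def class_preimage_def by auto

lemma class_preimage_shO_iff:
  assumes X: "X \<in> obj C"
  shows "shO C X \<in> class_preimage C H \<longleftrightarrow> X \<in> class_preimage C H"
proof
  assume "shO C X \<in> class_preimage C H"
  moreover have "class_cong (delta X) (\<lambda>x. - delta (shO C X) x)"
    using span_cong_sym[OF span_cong_smult[OF class_cong_shO[OF X], of "-1"]] by simp
  ultimately show "X \<in> class_preimage C H"
    using class_preimage_if_class_cong[OF fvec_smult[OF fvec_delta[OF shO_obj[OF X]]], of "-1"]
      class_preimage_neg X by simp
next
  assume "X \<in> class_preimage C H"
  then show "shO C X \<in> class_preimage C H"
    using class_preimage_if_class_cong[OF fvec_smult[OF fvec_delta[OF X]], of "-1"]
      class_preimage_neg shO_obj[OF X] class_cong_shO[OF X] by simp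
qed

lemma class_preimage_cone:
  assumes T: "(f, g, h) \<in> dist C"
    and src: "src C f \<in> class_preimage C H" and tgt: "tgt C f \<in> class_preimage C H"
  shows "tgt C g \<in> class_preimage C H"
proof -
  let ?v = "\<lambda>x. delta (tgt C f) x + - delta (src C f) x"
  have obj: "src C f \<in> obj C" "tgt C f \<in> obj C" using dist_obj[OF T] by blast+
  have neg: "(\<lambda>x. - delta (src C f) x) \<in> fvec (obj C)"
    using fvec_smult[OF fvec_delta[OF obj(1)], of "-1"] by simp
  have v: "?v \<in> fvec (obj C)" using fvec_add[OF fvec_delta[OF obj(2)] neg] .
  have "cls C (obj C) (delta (tgt C f)) \<in> H" using tgt unfolding class_preimage_def by blast
  then have "cls C (obj C) ?v \<in> H"
    using GQ_subspace_add[OF subspace fvec_delta[OF obj(2)] neg] class_preimage_neg[OF src] by blast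
  moreover have "class_cong (delta (tgt C g)) ?v"
    using span_cong_add[OF class_cong_dist[OF T] span_cong_refl[of _ "\<lambda>x. - delta (src C f) x"]]
    by simp
  ultimately show ?thesis using class_preimage_if_class_cong[OF v] dist_obj(3)[OF T] by blast
qed

lemma triangulated_subcat_class_preimage: "triangulated_subcat C (class_preimage C H)"
  unfolding triangulated_subcat_def
proof (intro conjI ballI allI impI)
  show "class_preimage C H \<subseteq> obj C" by (rule class_preimage_subset)
next
  fix X Y assume "X \<in> class_preimage C H" and "isomorphic C X Y"
  then show "Y \<in> class_preimage C H" by (rule class_preimage_iso)
next
  fix X assume "X \<in> obj C" and "X \<in> class_preimage C H"
  then show "shO C X \<in> class_preimage C H" using class_preimage_shO_iff by blast
next
  fix X assume "X \<in> obj C" and "shO C X \<in> class_preimage C H"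
  then show "X \<in> class_preimage C H" using class_preimage_shO_iff by blast
next
  fix f g h
  assume "(f, g, h) \<in> dist C \<and> src C f \<in> class_preimage C H \<and> tgt C f \<in> class_preimage C H"
  then show "tgt C g \<in> class_preimage C H" using class_preimage_cone by blast
qed

lemma dense_class_preimage: "dense_subcat C (class_preimage C H)"
  unfolding dense_subcat_def
proof (intro conjI ballI triangulated_subcat_class_preimage)
  fix U assume U: "U \<in> obj C"
  have zUU: "zro C U U \<in> hom C U U" using U U by (rule zro_hom)
  then obtain g h where T: "(zro C U U, g, h) \<in> dist C"
    using dist_ex_cone unfolding hom_def by blast
  have "class_cong (\<lambda>x. delta U x + delta (tgt C g) x) (delta U)"
    using class_cong_dist[OF T] zUU by (simp add: hom_def)
  from span_cong_add[OF this span_cong_refl[of _ "\<lambda>x. - delta U x"]]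
  have "class_cong (delta (tgt C g)) (\<lambda>_. 0)" by simp
  then have "tgt C g \<in> class_preimage C H"
    using class_preimage_if_class_cong[OF fvec_zero zero_in_subspace] dist_obj(3)[OF T] by blast
  then show "\<exists>V \<in> obj C. \<exists>W \<in> class_preimage C H. is_biprod C U V W"
    using dist_zro_cone_biprod[OF U T] shO_obj[OF U] by blast
qed

lemma cls_fvec_class_preimage:
  assumes "v \<in> fvec (class_preimage C H)"
  shows "cls C (obj C) v \<in> H"
  using assms
proof (induction rule: fvec_induct)
  case zero
  show ?case by (rule zero_in_subspace)
next
  case (add v y c)
  have y: "y \<in> obj C" "cls C (obj C) (delta y) \<in> H"
    using add.hyps(2) unfolding class_preimage_def by auto
  have v: "v \<in> fvec (obj C)" using fvec_mono[OF class_preimage_subset] add.hyps(1) by blast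
  have "cls C (obj C) (\<lambda>x. c * delta y x) \<in> H"
    by (rule GQ_subspace_smult[OF subspace fvec_delta[OF y(1)] y(2)])
  from GQ_subspace_add[OF subspace v fvec_smult[OF fvec_delta[OF y(1)]] add.IH this]
  show ?case .
qed

lemma subspace_subset_cls_fvec_class_preimage:
  assumes a: "a \<in> H"
  shows "a \<in> cls C (obj C) ` fvec (class_preimage C H)"
proof -
  obtain u where u: "u \<in> fvec (obj C)" and au: "a = cls C (obj C) u"
    using a subspace unfolding GQ_subspace_def GQ_def by blast
  obtain X n where X: "X \<in> obj C" and n: "n > 0"
    and uX: "class_cong (\<lambda>x. of_nat n * u x) (delta X)"
    using ex_obj_class_multiple[OF u] by blast
  have "cls C (obj C) (\<lambda>x. of_nat n * u x) \<in> H"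
    using GQ_subspace_smult[OF subspace u, of "of_nat n"] a au by simp
  from class_preimage_if_class_cong[OF fvec_smult[OF u] this X span_cong_sym[OF uX]]
  have "X \<in> class_preimage C H" .
  define w where "w = (\<lambda>x. (1 / of_nat n) * delta X x)"
  have w: "w \<in> fvec (class_preimage C H)"
    unfolding w_def using \<open>X \<in> class_preimage C H\<close> by (intro fvec_smult fvec_delta)
  then have w': "w \<in> fvec (obj C)" using fvec_mono[OF class_preimage_subset] by blast
  have "class_cong u w"
    using span_cong_smult[OF uX, of "1 / of_nat n"] n unfolding w_def by simp
  then have "a = cls C (obj C) w" using au iffD2[OF cls_eq_iff[OF u w']] by simp
  with w show ?thesis by (blast intro: image_eqI)
qed

lemma GQ_image_class_preimage: "GQ_image C (class_preimage C H) = H"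
proof -
  have "cls C (obj C) ` fvec (class_preimage C H) = H"
    using cls_fvec_class_preimage subspace_subset_cls_fvec_class_preimage by blast
  then show ?thesis by (simp add: GQ_image_eq[OF class_preimage_subset])
qed

end

theorem proposition3p10:
  fixes C :: "('o, 'm) tricat" and H :: "('o \<Rightarrow> rat) set set"
  assumes "triangulated C"
    and "GQ_subspace C H"
  shows "\<exists>!M. M \<in> I_H C H \<and> (\<forall>D \<in> I_H C H. M \<subseteq> D \<longrightarrow> D = M)"
proof -
  interpret triangulated_cat_GQ_subspace C H
    using assms by unfold_locales
  have greatest: "class_preimage C H \<in> I_H C H"
    unfolding I_H_def using dense_class_preimage GQ_image_class_preimage by blast
  have "D \<subseteq> class_preimage C H" if "D \<in> I_H C H" for D
  proof (rule GQ_image_subset_class_preimage)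
    show "D \<subseteq> obj C" using that unfolding I_H_def dense_subcat_def triangulated_subcat_def by blast
    show "GQ_image C D = H" using that unfolding I_H_def by blast
  qed
  with greatest show ?thesis by (intro ex1I[of _ "class_preimage C H"]) blast+
qed

end
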